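(* Let $H$ be a hypergraph on $V=[n]$. Then $H$ is $r$-cross-free if and only if $\mathrm{cl}_r(H)$ is $r$-cross-free.
   Context: Hypergraphs on $V$ are identified with their hyperedge sets. $\mathcal K_r(n)$ is the class of hypergraphs $\mathcal E$ on $V$ satisfying: (R0) every $X\subseteq V$ with $|X|\le r$ is in $\mathcal E$; (R1) $A\in\mathcal E\Rightarrow V\setminus A\in\mathcal E$; (R2) $A,B\in\mathcal E$ and $|A\cap B|\ge r\Rightarrow A\cup B\in\mathcal E$. $\mathcal K^0_r(n)$ is the class satisfying (R0) and (R1) only. $\mathrm{cl}_r(H)$ (resp. $\mathrm{cl}^0_r(H)$) is the intersection of all hypergraphs in $\mathcal K_r(n)$ (resp. $\mathcal K^0_r(n)$) containing $H$. $A,B\subseteq V$ are $r$-orthogonal if $\mathrm{cl}_r(\{A,B\})=\mathrm{cl}^0_r(\{A,B\})$. $H$ is $r$-cross-free if every pair of its hyperedges is $r$-orthogonal. *)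

theory Defs
  imports Main
begin

definition ground :: "nat \<Rightarrow> nat set" where
  "ground n = {1..n}"

definition hypergraph_on :: "nat \<Rightarrow> nat set set \<Rightarrow> bool" where
  "hypergraph_on n H \<longleftrightarrow> H \<subseteq> Pow (ground n)"

definition K0 :: "nat \<Rightarrow> nat \<Rightarrow> nat set set set" where
  "K0 r n = {E. hypergraph_on n E
      \<and> (\<forall>X. X \<subseteq> ground n \<and> card X \<le> r \<longrightarrow> X \<in> E)
      \<and> (\<forall>A\<in>E. ground n - A \<in> E)}"

definition K :: "nat \<Rightarrow> nat \<Rightarrow> nat set set set" where
  "K r n = {E. E \<in> K0 r n
      \<and> (\<forall>A\<in>E. \<forall>B\<in>E. card (A \<inter> B) \<ge> r \<longrightarrow> A \<union> B \<in> E)}"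

definition cl :: "nat \<Rightarrow> nat \<Rightarrow> nat set set \<Rightarrow> nat set set" where
  "cl r n H = \<Inter> {E \<in> K r n. H \<subseteq> E}"

definition cl0 :: "nat \<Rightarrow> nat \<Rightarrow> nat set set \<Rightarrow> nat set set" where
  "cl0 r n H = \<Inter> {E \<in> K0 r n. H \<subseteq> E}"

definition orthogonal :: "nat \<Rightarrow> nat \<Rightarrow> nat set \<Rightarrow> nat set \<Rightarrow> bool" where
  "orthogonal r n A B \<longleftrightarrow> cl r n {A, B} = cl0 r n {A, B}"

definition cross_free :: "nat \<Rightarrow> nat \<Rightarrow> nat set set \<Rightarrow> bool" where
  "cross_free r n H \<longleftrightarrow> (\<forall>A\<in>H. \<forall>B\<in>H. orthogonal r n A B)"

end

theory Submission
  imports Defs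
begin

text \<open>
  Explicitly, \<open>cl\<^sup>0\<^sub>r(H)\<close> consists of the hyperedges of \<open>H\<close>, their complements, and
  the sets \<open>X\<close> with \<open>|X| \<le> r\<close> or \<open>|V - X| \<le> r\<close>. These small and co-small sets never
  matter for (R2): if \<open>|X \<inter> Y| \<ge> r\<close>, then \<open>X \<union> Y = Y\<close> when \<open>|X| \<le> r\<close>, and \<open>X \<union> Y\<close> is
  co-small when \<open>|V - X| \<le> r\<close>. Hence \<open>cl\<^sup>0\<^sub>r(H)\<close> satisfies (R2), i.e. equals \<open>cl\<^sub>r(H)\<close>,
  as soon as it contains \<open>U \<union> W\<close> whenever \<open>U, W\<close> are hyperedges or complements of
  hyperedges with \<open>|U \<inter> W| \<ge> r\<close>; for \<open>U, W\<close> coming from two hyperedges \<open>A, B\<close> this is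
  what orthogonality of \<open>A\<close> and \<open>B\<close> provides. So \<open>cl\<^sub>r(H) = cl\<^sup>0\<^sub>r(H)\<close> for cross-free \<open>H\<close>,
  and its members are pairwise orthogonal, because orthogonality is invariant under
  complementation and holds trivially when one of the sets is small or co-small.
\<close>

definition compl_closure :: "nat \<Rightarrow> nat set set \<Rightarrow> nat set set" where
  "compl_closure n G = G \<union> (\<lambda>A. ground n - A) ` G"

definition small_or_cosmall :: "nat \<Rightarrow> nat \<Rightarrow> nat set set" where
  "small_or_cosmall r n = {X. X \<subseteq> ground n \<and> (card X \<le> r \<or> card (ground n - X) \<le> r)}"

definition R2_closed :: "nat \<Rightarrow> nat set set \<Rightarrow> bool" where
  "R2_closed r E \<longleftrightarrow> (\<forall>A\<in>E. \<forall>B\<in>E. r \<le> card (A \<inter> B) \<longrightarrow> A \<union> B \<in> E)"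

lemma finite_ground [simp]: "finite (ground n)"
  by (simp add: ground_def)

lemma K_iff: "E \<in> K r n \<longleftrightarrow> E \<in> K0 r n \<and> R2_closed r E"
  by (auto simp: K_def R2_closed_def)

lemma K0_compl_iff:
  assumes "E \<in> K0 r n" and "A \<subseteq> ground n"
  shows "ground n - A \<in> E \<longleftrightarrow> A \<in> E"
proof -
  have "ground n - (ground n - A) = A" using assms(2) by auto
  then show ?thesis using assms(1) by (auto simp: K0_def)
qed

lemma small_or_cosmall_subset_K0:
  assumes E: "E \<in> K0 r n"
  shows "small_or_cosmall r n \<subseteq> E"
proof
  fix X assume X: "X \<in> small_or_cosmall r n"
  then have sub: "X \<subseteq> ground n" by (simp add: small_or_cosmall_def)
  have R0: "\<And>Y. Y \<subseteq> ground n \<Longrightarrow> card Y \<le> r \<Longrightarrow> Y \<in> E"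
    using E by (simp add: K0_def)
  show "X \<in> E"
    using X R0[OF sub] R0[of "ground n - X"] K0_compl_iff[OF E sub]
    by (auto simp: small_or_cosmall_def)
qed

lemma compl_small_or_cosmall:
  "X \<in> small_or_cosmall r n \<Longrightarrow> ground n - X \<in> small_or_cosmall r n"
  by (auto simp: small_or_cosmall_def double_diff)

lemma compl_closure_Un_small_or_cosmall_in_K0:
  assumes "G \<subseteq> Pow (ground n)"
  shows "compl_closure n G \<union> small_or_cosmall r n \<in> K0 r n"
proof -
  let ?E = "compl_closure n G \<union> small_or_cosmall r n"
  have "?E \<subseteq> Pow (ground n)"
    using assms by (auto simp: compl_closure_def small_or_cosmall_def)
  moreover have "X \<in> ?E" if "X \<subseteq> ground n" "card X \<le> r" for X
    using that by (simp add: small_or_cosmall_def)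
  moreover have "ground n - A \<in> ?E" if A: "A \<in> ?E" for A
  proof -
    consider "A \<in> G" | B where "B \<in> G" "A = ground n - B" | "A \<in> small_or_cosmall r n"
      using A by (auto simp: compl_closure_def)
    then show ?thesis
    proof cases
      case (2 B)
      then have "ground n - A = B" using assms by auto
      then show ?thesis using 2 by (simp add: compl_closure_def)
    qed (simp_all add: compl_closure_def compl_small_or_cosmall)
  qed
  ultimately show ?thesis
    by (simp add: K0_def hypergraph_on_def)
qed

lemma compl_closure_subset_K0:
  assumes "E \<in> K0 r n" and "G \<subseteq> E"
  shows "compl_closure n G \<subseteq> E"
  using assms by (auto simp: compl_closure_def K0_def)

lemma cl0_explicit:
  assumes "G \<subseteq> Pow (ground n)"
  shows "cl0 r n G = compl_closure n G \<union> small_or_cosmall r n"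
proof
  have "G \<subseteq> compl_closure n G \<union> small_or_cosmall r n"
    by (auto simp: compl_closure_def)
  then show "cl0 r n G \<subseteq> compl_closure n G \<union> small_or_cosmall r n"
    unfolding cl0_def using compl_closure_Un_small_or_cosmall_in_K0[OF assms]
    by (intro Inter_lower) simp
  show "compl_closure n G \<union> small_or_cosmall r n \<subseteq> cl0 r n G"
    unfolding cl0_def
  proof (rule Inter_greatest)
    fix E assume "E \<in> {E \<in> K0 r n. G \<subseteq> E}"
    then have "E \<in> K0 r n" "G \<subseteq> E" by auto
    then show "compl_closure n G \<union> small_or_cosmall r n \<subseteq> E"
      by (intro Un_least compl_closure_subset_K0 small_or_cosmall_subset_K0)
  qed
qed

lemma cl0_mono: "G \<subseteq> G' \<Longrightarrow> cl0 r n G \<subseteq> cl0 r n G'"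
  by (auto simp: cl0_def)

lemma cl0_in_K0: "G \<subseteq> Pow (ground n) \<Longrightarrow> cl0 r n G \<in> K0 r n"
  by (simp add: cl0_explicit compl_closure_Un_small_or_cosmall_in_K0)

lemma cl0_subset_Pow: "G \<subseteq> Pow (ground n) \<Longrightarrow> cl0 r n G \<subseteq> Pow (ground n)"
  using cl0_in_K0[of G n r] by (simp add: K0_def hypergraph_on_def)

lemma Pow_ground_in_K: "Pow (ground n) \<in> K r n"
  by (auto simp: K_def K0_def hypergraph_on_def)

lemma cl_in_K:
  assumes "G \<subseteq> Pow (ground n)"
  shows "cl r n G \<in> K r n"
proof -
  let ?F = "{E \<in> K r n. G \<subseteq> E}"
  have "Pow (ground n) \<in> ?F" using Pow_ground_in_K assms by auto
  then have "hypergraph_on n (\<Inter>?F)" by (auto simp: hypergraph_on_def)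
  moreover have "\<forall>X. X \<subseteq> ground n \<and> card X \<le> r \<longrightarrow> X \<in> \<Inter>?F"
    by (auto simp: K_def K0_def)
  moreover have "\<forall>A\<in>\<Inter>?F. ground n - A \<in> \<Inter>?F"
    by (auto simp: K_def K0_def)
  moreover have "\<forall>A\<in>\<Inter>?F. \<forall>B\<in>\<Inter>?F. card (A \<inter> B) \<ge> r \<longrightarrow> A \<union> B \<in> \<Inter>?F"
    by (auto simp: K_def)
  ultimately show ?thesis
    by (simp add: K_def K0_def cl_def)
qed

lemma cl0_subset_cl: "cl0 r n G \<subseteq> cl r n G"
  unfolding cl0_def cl_def K_def by blast

lemma cl_eq_cl0_iff:
  assumes G: "G \<subseteq> Pow (ground n)"
  shows "cl r n G = cl0 r n G \<longleftrightarrow> R2_closed r (cl0 r n G)"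
proof
  assume "cl r n G = cl0 r n G"
  then show "R2_closed r (cl0 r n G)" using cl_in_K[OF G] K_iff by metis
next
  assume "R2_closed r (cl0 r n G)"
  then have "cl0 r n G \<in> K r n" using cl0_in_K0[OF G] K_iff by blast
  moreover have "G \<subseteq> cl0 r n G" by (auto simp: cl0_def)
  ultimately have "cl r n G \<subseteq> cl0 r n G" by (auto simp: cl_def)
  then show "cl r n G = cl0 r n G" using cl0_subset_cl by blast
qed

lemma Un_small_or_cosmall:
  assumes X: "X \<in> small_or_cosmall r n" and Y: "Y \<subseteq> ground n"
    and r: "r \<le> card (X \<inter> Y)"
  shows "X \<union> Y = Y \<or> X \<union> Y \<in> small_or_cosmall r n"
proof (cases "card X \<le> r")
  case True
  have "finite X" using X by (auto simp: small_or_cosmall_def intro: finite_subset)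
  moreover have "card X \<le> card (X \<inter> Y)" using True r by simp
  ultimately have "X \<inter> Y = X" by (metis card_seteq inf_le1)
  then show ?thesis by auto
next
  case False
  then have "card (ground n - X) \<le> r" using X by (simp add: small_or_cosmall_def)
  moreover have "card (ground n - (X \<union> Y)) \<le> card (ground n - X)"
    by (rule card_mono) auto
  ultimately show ?thesis using X Y by (auto simp: small_or_cosmall_def)
qed

lemma R2_closed_cl0_iff:
  assumes G: "G \<subseteq> Pow (ground n)"
  shows "R2_closed r (cl0 r n G) \<longleftrightarrow>
    (\<forall>U\<in>compl_closure n G. \<forall>W\<in>compl_closure n G. r \<le> card (U \<inter> W) \<longrightarrow> U \<union> W \<in> cl0 r n G)"
  (is "_ \<longleftrightarrow> ?pairs")
proof
  assume "R2_closed r (cl0 r n G)"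
  then show ?pairs by (auto simp: R2_closed_def cl0_explicit[OF G])
next
  assume pairs: ?pairs
  have "U \<union> W \<in> cl0 r n G"
    if U: "U \<in> cl0 r n G" and W: "W \<in> cl0 r n G" and r: "r \<le> card (U \<inter> W)" for U W
  proof -
    have "U \<subseteq> ground n" "W \<subseteq> ground n" using U W cl0_subset_Pow[OF G] by auto
    then consider "U \<in> small_or_cosmall r n" "U \<union> W = W \<or> U \<union> W \<in> small_or_cosmall r n"
      | "W \<in> small_or_cosmall r n" "U \<union> W = U \<or> U \<union> W \<in> small_or_cosmall r n"
      | "U \<in> compl_closure n G" "W \<in> compl_closure n G"
      using U W r Un_small_or_cosmall[of U r n W] Un_small_or_cosmall[of W r n U]
      by (auto simp: cl0_explicit[OF G] Int_commute Un_commute)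
    then show ?thesis
      using U W r pairs by cases (auto simp: cl0_explicit[OF G])
  qed
  then show "R2_closed r (cl0 r n G)" by (simp add: R2_closed_def)
qed

lemma cl0_insert_compl:
  assumes "A \<subseteq> ground n"
  shows "cl0 r n (insert (ground n - A) G) = cl0 r n (insert A G)"
proof -
  have "{E \<in> K0 r n. insert (ground n - A) G \<subseteq> E} = {E \<in> K0 r n. insert A G \<subseteq> E}"
    using K0_compl_iff[OF _ assms] by auto
  then show ?thesis by (simp add: cl0_def)
qed

lemma cl_insert_compl:
  assumes "A \<subseteq> ground n"
  shows "cl r n (insert (ground n - A) G) = cl r n (insert A G)"
proof -
  have "{E \<in> K r n. insert (ground n - A) G \<subseteq> E} = {E \<in> K r n. insert A G \<subseteq> E}"
    using K0_compl_iff[OF _ assms] by (auto simp: K_iff)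
  then show ?thesis by (simp add: cl_def)
qed

lemma orthogonal_commute: "orthogonal r n A B \<longleftrightarrow> orthogonal r n B A"
  by (simp add: orthogonal_def insert_commute)

lemma orthogonal_compl_left:
  "A \<subseteq> ground n \<Longrightarrow> orthogonal r n (ground n - A) B \<longleftrightarrow> orthogonal r n A B"
  by (simp add: orthogonal_def cl_insert_compl cl0_insert_compl)

lemma orthogonal_compl_closure:
  assumes "orthogonal r n A B" and "A \<subseteq> ground n" "B \<subseteq> ground n"
    and "U \<in> compl_closure n {A}" "W \<in> compl_closure n {B}"
  shows "orthogonal r n U W"
  using assms orthogonal_compl_left orthogonal_commute
  by (auto simp: compl_closure_def)

lemma ground_in_small_or_cosmall: "ground n \<in> small_or_cosmall r n"
  by (simp add: small_or_cosmall_def)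

lemma orthogonal_small_or_cosmall:
  assumes X: "X \<in> small_or_cosmall r n" and Y: "Y \<subseteq> ground n"
  shows "orthogonal r n X Y"
proof -
  have G: "{X, Y} \<subseteq> Pow (ground n)" using X Y by (auto simp: small_or_cosmall_def)
  have cl0: "cl0 r n {X, Y} = compl_closure n {X, Y} \<union> small_or_cosmall r n"
    using cl0_explicit[OF G] .
  have "U \<union> W \<in> cl0 r n {X, Y}"
    if U: "U \<in> compl_closure n {X, Y}" and W: "W \<in> compl_closure n {X, Y}"
      and r: "r \<le> card (U \<inter> W)" for U W
  proof -
    have sub: "U \<subseteq> ground n" "W \<subseteq> ground n" using U W G by (auto simp: compl_closure_def)
    consider "U \<in> small_or_cosmall r n" | "W \<in> small_or_cosmall r n"
      | "U \<in> {Y, ground n - Y}" "W \<in> {Y, ground n - Y}"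
      using U W X compl_small_or_cosmall[OF X] by (auto simp: compl_closure_def)
    then show ?thesis
    proof cases
      case 1
      with Un_small_or_cosmall[OF 1 sub(2) r] show ?thesis using W by (auto simp: cl0)
    next
      case 2
      have "r \<le> card (W \<inter> U)" using r by (simp add: Int_commute)
      with Un_small_or_cosmall[OF 2 sub(1)] show ?thesis using U by (auto simp: cl0 Un_commute)
    next
      case 3
      then have "U \<union> W = U \<or> U \<union> W = ground n" using Y by auto
      then show ?thesis using U ground_in_small_or_cosmall[of n r] by (auto simp: cl0)
    qed
  qed
  then show ?thesis
    by (simp add: orthogonal_def cl_eq_cl0_iff[OF G] R2_closed_cl0_iff[OF G])
qed

lemma cl_eq_cl0_if_cross_free:
  assumes H: "H \<subseteq> Pow (ground n)" and cf: "cross_free r n H"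
  shows "cl r n H = cl0 r n H"
proof -
  have "U \<union> W \<in> cl0 r n H"
    if U: "U \<in> compl_closure n H" and W: "W \<in> compl_closure n H"
      and r: "r \<le> card (U \<inter> W)" for U W
  proof -
    obtain A B where AB: "A \<in> H" "B \<in> H"
      and UW: "U \<in> compl_closure n {A, B}" "W \<in> compl_closure n {A, B}"
      using U W by (auto simp: compl_closure_def)
    have G: "{A, B} \<subseteq> Pow (ground n)" using AB H by auto
    have "orthogonal r n A B" using cf AB by (simp add: cross_free_def)
    then have "R2_closed r (cl0 r n {A, B})"
      by (simp add: orthogonal_def cl_eq_cl0_iff[OF G])
    then have "U \<union> W \<in> cl0 r n {A, B}"
      using UW r by (simp add: R2_closed_cl0_iff[OF G])
    moreover have "cl0 r n {A, B} \<subseteq> cl0 r n H" using AB by (intro cl0_mono) auto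
    ultimately show ?thesis by blast
  qed
  then show ?thesis by (simp add: cl_eq_cl0_iff[OF H] R2_closed_cl0_iff[OF H])
qed

lemma cl0_memberE:
  assumes "G \<subseteq> Pow (ground n)" and "X \<in> cl0 r n G"
  obtains "X \<in> small_or_cosmall r n" | A where "A \<in> G" "X \<in> compl_closure n {A}"
  using assms by (auto simp: cl0_explicit compl_closure_def)

lemma cross_free_cl0:
  assumes H: "H \<subseteq> Pow (ground n)" and cf: "cross_free r n H"
  shows "cross_free r n (cl0 r n H)"
  unfolding cross_free_def
proof (intro ballI)
  fix X Y assume X: "X \<in> cl0 r n H" and Y: "Y \<in> cl0 r n H"
  have sub: "X \<subseteq> ground n" "Y \<subseteq> ground n"
    using X Y cl0_subset_Pow[OF H] by auto
  show "orthogonal r n X Y"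
  proof (cases "X \<in> small_or_cosmall r n \<or> Y \<in> small_or_cosmall r n")
    case True
    then show ?thesis
      using orthogonal_small_or_cosmall[OF _ sub(2)] orthogonal_small_or_cosmall[OF _ sub(1)]
        orthogonal_commute[of r n X Y] by blast
  next
    case False
    obtain A where A: "A \<in> H" "X \<in> compl_closure n {A}"
      using cl0_memberE[OF H X] False by blast
    obtain B where B: "B \<in> H" "Y \<in> compl_closure n {B}"
      using cl0_memberE[OF H Y] False by blast
    have "orthogonal r n A B" using cf A B by (simp add: cross_free_def)
    moreover have "A \<subseteq> ground n" "B \<subseteq> ground n" using H A B by auto
    ultimately show ?thesis using orthogonal_compl_closure A(2) B(2) by blast
  qed
qed

theorem mainTheorem18:
  fixes n r :: nat and H :: "nat set set"
  assumes "hypergraph_on n H"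
  shows "cross_free r n H \<longleftrightarrow> cross_free r n (cl r n H)"
proof
  have H: "H \<subseteq> Pow (ground n)" using assms by (simp add: hypergraph_on_def)
  assume "cross_free r n H"
  then show "cross_free r n (cl r n H)"
    using cl_eq_cl0_if_cross_free[OF H] cross_free_cl0[OF H] by simp
next
  assume "cross_free r n (cl r n H)"
  moreover have "H \<subseteq> cl r n H" by (auto simp: cl_def)
  ultimately show "cross_free r n H" by (auto simp: cross_free_def)
qed

end
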